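(* Let $f:\mathbb{R}^2\to\mathbb{R}^2$ be a smooth one-generic mapping having a cusp point at the origin with $f(\mathbf{0})=\mathbf{0}$. Let $L(x,y)=(ax-by,bx+ay)$ with $a^2+b^2=1$ and $g=L\circ f$. Then $\mathbf{0}$ is a cusp point of $g$, and if $F$, $G$ are the mappings associated with $f$, $g$ respectively, then $\det DG(\mathbf{0})=\det DF(\mathbf{0})$.
   Context: For a smooth $h:\mathbb{R}^2\to\mathbb{R}^2$ with $J_h=\det Dh$, the associated mapping is $H=Dh\cdot(-\partial J_h/\partial y,\ \partial J_h/\partial x)^T$. $f$ is one-generic if $dJ\ne0$ on $J^{-1}(0)$ where $J=\det Df$ (equivalently, $j^1f$ is transverse to the corank strata). A point $p\in S_1(f)=J^{-1}(0)$ with $T_pS_1(f)=\ker Df(p)$ is a cusp point if it is a simple zero of $dJ(\xi)$ on $S_1(f)$, $\xi$ a nonvanishing vector field along $S_1(f)$ in $\ker Df$. *)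

theory Defs
  imports "HOL-Analysis.Analysis"
begin

definition px :: "(real \<times> real \<Rightarrow> real) \<Rightarrow> real \<times> real \<Rightarrow> real" where
  "px \<phi> p = deriv (\<lambda>t. \<phi> (t, snd p)) (fst p)"

definition py :: "(real \<times> real \<Rightarrow> real) \<Rightarrow> real \<times> real \<Rightarrow> real" where
  "py \<phi> p = deriv (\<lambda>t. \<phi> (fst p, t)) (snd p)"

text \<open>Smooth (C-infinity) scalar functions: differentiable everywhere, with all
  partial derivatives again smooth.\<close>

coinductive smooth_fun :: "(real \<times> real \<Rightarrow> real) \<Rightarrow> bool" where
  "(\<forall>p. \<phi> differentiable (at p)) \<Longrightarrow> smooth_fun (px \<phi>) \<Longrightarrow> smooth_fun (py \<phi>)
    \<Longrightarrow> smooth_fun \<phi>"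

definition smooth_map :: "(real \<times> real \<Rightarrow> real \<times> real) \<Rightarrow> bool" where
  "smooth_map h \<longleftrightarrow> smooth_fun (\<lambda>p. fst (h p)) \<and> smooth_fun (\<lambda>p. snd (h p))"

definition Dmap :: "(real \<times> real \<Rightarrow> real \<times> real) \<Rightarrow> real \<times> real \<Rightarrow> real \<times> real \<Rightarrow> real \<times> real" where
  "Dmap h p v =
     (px (\<lambda>q. fst (h q)) p * fst v + py (\<lambda>q. fst (h q)) p * snd v,
      px (\<lambda>q. snd (h q)) p * fst v + py (\<lambda>q. snd (h q)) p * snd v)"

definition jac :: "(real \<times> real \<Rightarrow> real \<times> real) \<Rightarrow> real \<times> real \<Rightarrow> real" where
  "jac h p = px (\<lambda>q. fst (h q)) p * py (\<lambda>q. snd (h q)) p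
           - py (\<lambda>q. fst (h q)) p * px (\<lambda>q. snd (h q)) p"

definition assoc_map :: "(real \<times> real \<Rightarrow> real \<times> real) \<Rightarrow> real \<times> real \<Rightarrow> real \<times> real" where
  "assoc_map h p = Dmap h p (- py (jac h) p, px (jac h) p)"

definition one_generic :: "(real \<times> real \<Rightarrow> real \<times> real) \<Rightarrow> bool" where
  "one_generic h \<longleftrightarrow> (\<forall>p. jac h p = 0 \<longrightarrow> (px (jac h) p, py (jac h) p) \<noteq> (0, 0))"

definition S1 :: "(real \<times> real \<Rightarrow> real \<times> real) \<Rightarrow> (real \<times> real) set" where
  "S1 h = {p. jac h p = 0}"

text \<open>Cusp point: p \<in> S_1(h), T_p S_1(h) = ker Dh(p) (the tangent line of the
  regular level set J^{-1}(0) being ker dJ_p), and p is a simple zero on S_1(h) of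
  the function q \<mapsto> dJ_q(\<xi>(q)), where \<xi> is a smooth vector field, nonvanishing and
  in ker Dh along S_1(h) near p.  "Simple zero on S_1" means the derivative of
  this function along the curve S_1(h) at p, i.e. in the tangent direction
  (-J_y(p), J_x(p)), is nonzero.\<close>

definition dJ_along :: "(real \<times> real \<Rightarrow> real \<times> real) \<Rightarrow> (real \<times> real \<Rightarrow> real \<times> real) \<Rightarrow> real \<times> real \<Rightarrow> real" where
  "dJ_along h \<xi> q = px (jac h) q * fst (\<xi> q) + py (jac h) q * snd (\<xi> q)"

definition cusp_point :: "(real \<times> real \<Rightarrow> real \<times> real) \<Rightarrow> real \<times> real \<Rightarrow> bool" where
  "cusp_point h p \<longleftrightarrow>
     p \<in> S1 h \<and>
     {v. px (jac h) p * fst v + py (jac h) p * snd v = 0} = {v. Dmap h p v = (0, 0)} \<and>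
     (\<exists>U \<xi>. open U \<and> p \<in> U \<and> smooth_map \<xi> \<and>
        (\<forall>q \<in> U \<inter> S1 h. \<xi> q \<noteq> (0, 0) \<and> Dmap h q (\<xi> q) = (0, 0)) \<and>
        dJ_along h \<xi> p = 0 \<and>
        (- py (jac h) p) * px (dJ_along h \<xi>) p + px (jac h) p * py (dJ_along h \<xi>) p \<noteq> 0)"

definition detD :: "(real \<times> real \<Rightarrow> real \<times> real) \<Rightarrow> real \<times> real \<Rightarrow> real" where
  "detD H p = jac H p"

definition rot :: "real \<Rightarrow> real \<Rightarrow> real \<times> real \<Rightarrow> real \<times> real" where
  "rot a b v = (a * fst v - b * snd v, b * fst v + a * snd v)"

end

theory Submission
  imports Defs
begin

text \<open>A rotation L has determinant 1 and is invertible, so J_g = J_f, Dg = L \<circ> Df and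
  ker Dg = ker Df; every ingredient of the cusp condition for g is therefore literally
  the one for f. The associated mapping transforms as G = L \<circ> F, whence
  det DG = det L \<cdot> det DF = det DF. The only analytic input is that the components of F
  are differentiable, which follows because smooth functions form a ring closed under
  partial differentiation.\<close>

lemma has_real_derivative_px:
  assumes "\<phi> differentiable (at p)"
  shows "((\<lambda>t. \<phi> (t, snd p)) has_real_derivative px \<phi> p) (at (fst p))"
proof -
  have "((\<lambda>t::real. (t, snd p)) has_derivative (\<lambda>h. (h, 0))) (at (fst p))"
    by (intro has_derivative_Pair has_derivative_ident has_derivative_const)
  then have "(\<lambda>t::real. (t, snd p)) differentiable (at (fst p))"
    unfolding differentiable_def by blast
  with assms have "(\<lambda>t. \<phi> (t, snd p)) differentiable (at (fst p))"
    using differentiable_chain_at[of "\<lambda>t. (t, snd p)" "fst p" \<phi>] by (simp add: o_def)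
  then show ?thesis
    unfolding px_def by (simp add: DERIV_deriv_iff_real_differentiable)
qed

lemma has_real_derivative_py:
  assumes "\<phi> differentiable (at p)"
  shows "((\<lambda>t. \<phi> (fst p, t)) has_real_derivative py \<phi> p) (at (snd p))"
proof -
  have "((\<lambda>t::real. (fst p, t)) has_derivative (\<lambda>h. (0, h))) (at (snd p))"
    by (intro has_derivative_Pair has_derivative_ident has_derivative_const)
  then have "(\<lambda>t::real. (fst p, t)) differentiable (at (snd p))"
    unfolding differentiable_def by blast
  with assms have "(\<lambda>t. \<phi> (fst p, t)) differentiable (at (snd p))"
    using differentiable_chain_at[of "\<lambda>t. (fst p, t)" "snd p" \<phi>] by (simp add: o_def)
  then show ?thesis
    unfolding py_def by (simp add: DERIV_deriv_iff_real_differentiable)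
qed

lemma px_const [simp]: "px (\<lambda>q. c) p = 0" and py_const [simp]: "py (\<lambda>q. c) p = 0"
  by (simp_all add: px_def py_def)

lemma
  assumes "u differentiable (at p)" "v differentiable (at p)"
  shows px_add: "px (\<lambda>q. u q + v q) p = px u p + px v p"
    and py_add: "py (\<lambda>q. u q + v q) p = py u p + py v p"
    and px_diff: "px (\<lambda>q. u q - v q) p = px u p - px v p"
    and py_diff: "py (\<lambda>q. u q - v q) p = py u p - py v p"
    and px_mult: "px (\<lambda>q. u q * v q) p = px u p * v p + u p * px v p"
    and py_mult: "py (\<lambda>q. u q * v q) p = py u p * v p + u p * py v p"
  using has_real_derivative_px[OF assms(1)] has_real_derivative_px[OF assms(2)]
    has_real_derivative_py[OF assms(1)] has_real_derivative_py[OF assms(2)]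
  unfolding px_def[of "\<lambda>q. _ q + _ q"] py_def[of "\<lambda>q. _ q + _ q"]
    px_def[of "\<lambda>q. _ q - _ q"] py_def[of "\<lambda>q. _ q - _ q"]
    px_def[of "\<lambda>q. _ q * _ q"] py_def[of "\<lambda>q. _ q * _ q"]
  by (auto intro!: DERIV_imp_deriv derivative_eq_intros)

lemma
  assumes "u differentiable (at p)" "v differentiable (at p)"
  shows px_lincomb: "px (\<lambda>q. a * u q + b * v q) p = a * px u p + b * px v p"
    and py_lincomb: "py (\<lambda>q. a * u q + b * v q) p = a * py u p + b * py v p"
  using assms by (simp_all add: px_add py_add px_mult py_mult)

inductive smooth_closure :: "(real \<times> real \<Rightarrow> real) \<Rightarrow> bool" where
  smooth: "smooth_fun u \<Longrightarrow> smooth_closure u"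
| const: "smooth_closure (\<lambda>q. c)"
| add: "smooth_closure u \<Longrightarrow> smooth_closure v \<Longrightarrow> smooth_closure (\<lambda>q. u q + v q)"
| diff: "smooth_closure u \<Longrightarrow> smooth_closure v \<Longrightarrow> smooth_closure (\<lambda>q. u q - v q)"
| mult: "smooth_closure u \<Longrightarrow> smooth_closure v \<Longrightarrow> smooth_closure (\<lambda>q. u q * v q)"

lemma smooth_fun_differentiable: "smooth_fun u \<Longrightarrow> u differentiable (at p)"
  by (erule smooth_fun.cases) (metis prod.collapse)

lemma smooth_fun_px: "smooth_fun u \<Longrightarrow> smooth_fun (px u)"
  and smooth_fun_py: "smooth_fun u \<Longrightarrow> smooth_fun (py u)"
  by (auto elim: smooth_fun.cases)

lemma smooth_closure_differentiable: "smooth_closure u \<Longrightarrow> u differentiable (at p)"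
  by (induction rule: smooth_closure.induct)
    (auto intro: smooth_fun_differentiable differentiable_add differentiable_diff differentiable_mult)

lemma smooth_closure_partials:
  "smooth_closure u \<Longrightarrow> smooth_closure (px u) \<and> smooth_closure (py u)"
proof (induction rule: smooth_closure.induct)
  case (smooth u)
  then show ?case by (simp add: smooth_closure.smooth smooth_fun_px smooth_fun_py)
next
  case (const c)
  show ?case by (simp add: smooth_closure.const)
next
  case (add u v)
  then have "px (\<lambda>q. u q + v q) = (\<lambda>q. px u q + px v q)"
    "py (\<lambda>q. u q + v q) = (\<lambda>q. py u q + py v q)"
    by (simp_all add: fun_eq_iff px_add py_add smooth_closure_differentiable)
  with add.IH show ?case by (simp add: smooth_closure.add)
next
  case (diff u v)
  then have "px (\<lambda>q. u q - v q) = (\<lambda>q. px u q - px v q)"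
    "py (\<lambda>q. u q - v q) = (\<lambda>q. py u q - py v q)"
    by (simp_all add: fun_eq_iff px_diff py_diff smooth_closure_differentiable)
  with diff.IH show ?case by (simp add: smooth_closure.diff)
next
  case (mult u v)
  then have "px (\<lambda>q. u q * v q) = (\<lambda>q. px u q * v q + u q * px v q)"
    "py (\<lambda>q. u q * v q) = (\<lambda>q. py u q * v q + u q * py v q)"
    by (simp_all add: fun_eq_iff px_mult py_mult smooth_closure_differentiable)
  with mult show ?case by (simp add: smooth_closure.add smooth_closure.mult)
qed

lemma smooth_closure_eq_smooth_fun: "smooth_closure = smooth_fun"
proof (intro ext iffI)
  fix u
  assume "smooth_closure u"
  then show "smooth_fun u"
    by (coinduction arbitrary: u)
      (auto dest: smooth_closure_partials intro: smooth_closure_differentiable)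
qed (rule smooth_closure.smooth)

lemmas smooth_fun_diff = smooth_closure.diff[unfolded smooth_closure_eq_smooth_fun]
  and smooth_fun_mult = smooth_closure.mult[unfolded smooth_closure_eq_smooth_fun]

lemma smooth_map_differentiable:
  assumes "smooth_map h"
  shows "(\<lambda>q. fst (h q)) differentiable (at p)" "(\<lambda>q. snd (h q)) differentiable (at p)"
  using assms by (simp_all add: smooth_map_def smooth_fun_differentiable)

lemma smooth_fun_jac: "smooth_map h \<Longrightarrow> smooth_fun (jac h)"
  unfolding smooth_map_def jac_def[abs_def]
  by (intro smooth_fun_diff smooth_fun_mult smooth_fun_px smooth_fun_py) auto

lemma smooth_map_assoc_map: "smooth_map h \<Longrightarrow> smooth_map (assoc_map h)"
  using smooth_fun_jac[of h] unfolding smooth_map_def assoc_map_def Dmap_def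
  by (auto intro!: smooth_fun_diff smooth_fun_mult smooth_fun_px smooth_fun_py)

lemma rot_inverse:
  assumes "a\<^sup>2 + b\<^sup>2 = 1"
  shows "rot a (- b) (rot a b w) = w"
proof -
  have "rot a (- b) (rot a b w) = ((a\<^sup>2 + b\<^sup>2) * fst w, (a\<^sup>2 + b\<^sup>2) * snd w)"
    by (simp add: rot_def power2_eq_square algebra_simps)
  with assms show ?thesis by simp
qed

lemma rot_eq_zero_iff:
  assumes "a\<^sup>2 + b\<^sup>2 = 1"
  shows "rot a b w = (0, 0) \<longleftrightarrow> w = (0, 0)"
proof
  assume "rot a b w = (0, 0)"
  then have "rot a (- b) (rot a b w) = (0, 0)" by (simp add: rot_def)
  with rot_inverse[OF assms] show "w = (0, 0)" by simp
qed (simp add: rot_def)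

lemma
  assumes "(\<lambda>q. fst (h q)) differentiable (at p)" "(\<lambda>q. snd (h q)) differentiable (at p)"
  shows jac_rot_comp: "jac (rot a b \<circ> h) p = (a\<^sup>2 + b\<^sup>2) * jac h p"
    and Dmap_rot_comp: "Dmap (rot a b \<circ> h) p v = rot a b (Dmap h p v)"
proof -
  have components: "(\<lambda>q. fst ((rot a b \<circ> h) q)) = (\<lambda>q. a * fst (h q) + (- b) * snd (h q))"
    "(\<lambda>q. snd ((rot a b \<circ> h) q)) = (\<lambda>q. b * fst (h q) + a * snd (h q))"
    by (auto simp: rot_def)
  note partials = px_lincomb[OF assms] py_lincomb[OF assms]
  show "jac (rot a b \<circ> h) p = (a\<^sup>2 + b\<^sup>2) * jac h p"
    unfolding jac_def components partials by (simp add: power2_eq_square algebra_simps)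
  show "Dmap (rot a b \<circ> h) p v = rot a b (Dmap h p v)"
    unfolding Dmap_def components partials by (simp add: rot_def algebra_simps)
qed

context
  fixes h :: "real \<times> real \<Rightarrow> real \<times> real" and a b :: real
  assumes differentiable: "\<And>p. (\<lambda>q. fst (h q)) differentiable (at p)"
    "\<And>p. (\<lambda>q. snd (h q)) differentiable (at p)"
    and unit: "a\<^sup>2 + b\<^sup>2 = 1"
begin

lemma jac_rot_comp_eq: "jac (rot a b \<circ> h) = jac h"
  using jac_rot_comp[OF differentiable] unit by auto

lemma cusp_point_rot_comp_iff: "cusp_point (rot a b \<circ> h) p \<longleftrightarrow> cusp_point h p"
proof -
  have "Dmap (rot a b \<circ> h) q v = (0, 0) \<longleftrightarrow> Dmap h q v = (0, 0)" for q v
    using Dmap_rot_comp[OF differentiable] rot_eq_zero_iff[OF unit] by simp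
  moreover have "S1 (rot a b \<circ> h) = S1 h" "dJ_along (rot a b \<circ> h) = dJ_along h"
    by (simp_all add: S1_def dJ_along_def[abs_def] jac_rot_comp_eq)
  ultimately show ?thesis
    unfolding cusp_point_def jac_rot_comp_eq by simp
qed

lemma assoc_map_rot_comp: "assoc_map (rot a b \<circ> h) = rot a b \<circ> assoc_map h"
  by (simp add: fun_eq_iff assoc_map_def Dmap_rot_comp[OF differentiable] jac_rot_comp_eq)

end

theorem mainTheorem11:
  fixes f :: "real \<times> real \<Rightarrow> real \<times> real" and a b :: real
  assumes "smooth_map f"
    and "one_generic f"
    and "cusp_point f (0, 0)"
    and "f (0, 0) = (0, 0)"
    and "a\<^sup>2 + b\<^sup>2 = 1"
  shows "cusp_point (rot a b \<circ> f) (0, 0) \<and>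
         detD (assoc_map (rot a b \<circ> f)) (0, 0) = detD (assoc_map f) (0, 0)"
proof
  note f_differentiable = smooth_map_differentiable[OF assms(1)]
  show "cusp_point (rot a b \<circ> f) (0, 0)"
    using cusp_point_rot_comp_iff[OF f_differentiable assms(5)] assms(3) by simp
  have "detD (assoc_map (rot a b \<circ> f)) (0, 0) = jac (rot a b \<circ> assoc_map f) (0, 0)"
    by (simp add: detD_def assoc_map_rot_comp[OF f_differentiable assms(5)])
  also have "\<dots> = jac (assoc_map f) (0, 0)"
    using jac_rot_comp_eq[OF smooth_map_differentiable[OF smooth_map_assoc_map[OF assms(1)]] assms(5)]
    by simp
  finally show "detD (assoc_map (rot a b \<circ> f)) (0, 0) = detD (assoc_map f) (0, 0)"
    by (simp add: detD_def)
qed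

end
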